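(* Let $C\subseteq[n]$ be a nonempty proper subset and let $\ket{\psi}=\ket{a}_C\otimes\ket{b}_{\overline{C}}$ be an $n$-qubit state, where $\ket{a}_C$ and $\ket{b}_{\overline{C}}$ are each $\epsilon$-far from every multipartite product state. Suppose we are given two copies of $\ket{\psi}$ and run the SWAP test on a nonempty proper subset $S\subseteq[n]$ of the qubits. If $S=C$ or $S=\overline{C}$, the SWAP test always accepts. If $S\ne C,\overline{C}$, the SWAP test accepts with probability at most $1-\epsilon^2/2$.
   Context: A state on a set $Q$ of qubits is multipartite product if it equals $\ket{a'}_D\otimes\ket{b'}_{Q\setminus D}$ for some nonempty proper $D\subsetneq Q$; a pure state $\ket{\phi}$ is $\epsilon$-far from a set $\mathcal{P}$ if $|\langle\phi|\chi\rangle|^2\le1-\epsilon^2$ for all $\ket{\chi}\in\mathcal{P}$. The SWAP test on the qubits $S$ of two copies $\ket{\psi}\otimes\ket{\psi}$: append an ancilla qubit in $\ket{+}$, apply, controlled on the ancilla, the unitary that swaps the qubits in $S$ of the first copy with the corresponding qubits of the second copy, apply a Hadamard to the ancilla, measure it in the standard basis and accept on outcome $0$. Equivalently it measures the projector $\frac12(I+\mathrm{SWAP}_S)$, with acceptance probability $\frac12+\frac12\mathrm{Tr}(\psi_S^2)$. *)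

theory Defs
  imports Complex_Main
begin

text \<open>A pure state on a finite set Q of qubits (labelled by naturals) is a function
  assigning an amplitude to each computational basis string; a basis string is
  encoded as the subset x of Q of qubits in state 1. Only values on Pow Q matter.\<close>

definition is_state :: "nat set \<Rightarrow> (nat set \<Rightarrow> complex) \<Rightarrow> bool" where
  "is_state Q \<phi> \<longleftrightarrow> (\<Sum>x\<in>Pow Q. (cmod (\<phi> x))^2) = 1"

definition inner_q :: "nat set \<Rightarrow> (nat set \<Rightarrow> complex) \<Rightarrow> (nat set \<Rightarrow> complex) \<Rightarrow> complex" where
  "inner_q Q \<phi> \<chi> = (\<Sum>x\<in>Pow Q. cnj (\<phi> x) * \<chi> x)"

definition tensor_q :: "nat set \<Rightarrow> nat set \<Rightarrow> (nat set \<Rightarrow> complex) \<Rightarrow> (nat set \<Rightarrow> complex) \<Rightarrow> (nat set \<Rightarrow> complex)" where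
  "tensor_q D E a b = (\<lambda>x. a (x \<inter> D) * b (x \<inter> E))"

definition multipartite_product :: "nat set \<Rightarrow> (nat set \<Rightarrow> complex) \<Rightarrow> bool" where
  "multipartite_product Q \<chi> \<longleftrightarrow> is_state Q \<chi> \<and>
     (\<exists>D a' b'. D \<noteq> {} \<and> D \<subset> Q \<and> is_state D a' \<and> is_state (Q - D) b' \<and>
        (\<forall>x\<in>Pow Q. \<chi> x = tensor_q D (Q - D) a' b' x))"

definition eps_far_from_product :: "nat set \<Rightarrow> real \<Rightarrow> (nat set \<Rightarrow> complex) \<Rightarrow> bool" where
  "eps_far_from_product Q \<epsilon> \<phi> \<longleftrightarrow>
     (\<forall>\<chi>. multipartite_product Q \<chi> \<longrightarrow> (cmod (inner_q Q \<phi> \<chi>))^2 \<le> 1 - \<epsilon>^2)"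

definition two_copies :: "(nat set \<Rightarrow> complex) \<Rightarrow> (nat set \<times> nat set \<Rightarrow> complex)" where
  "two_copies \<psi> = (\<lambda>(x1, x2). \<psi> x1 * \<psi> x2)"

definition swap_on :: "nat set \<Rightarrow> nat set \<times> nat set \<Rightarrow> nat set \<times> nat set" where
  "swap_on S = (\<lambda>(x1, x2). ((x1 - S) \<union> (x2 \<inter> S), (x2 - S) \<union> (x1 \<inter> S)))"

text \<open>Acceptance probability of the SWAP test on qubits S of two copies of psi (a state on Q):
  the expectation of the projector (I + SWAP_S)/2 in the state psi \<otimes> psi.\<close>
definition swap_test_accept_prob :: "nat set \<Rightarrow> nat set \<Rightarrow> (nat set \<Rightarrow> complex) \<Rightarrow> real" where
  "swap_test_accept_prob Q S \<psi> =
     Re (\<Sum>p\<in>Pow Q \<times> Pow Q. cnj (two_copies \<psi> p) *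
           ((two_copies \<psi> p + two_copies \<psi> (swap_on S p)) / 2))"

end

theory Submission
  imports Defs
begin

(* The acceptance probability is (1 + Tr rho_S^2) / 2, and for psi = a (x) b the purity
  factorises into the purity of a on S \<inter> C times the purity of b on S - C. A factor is 1
  when S does not split its block. When S splits a block A into K and A - K, view the
  amplitudes as a matrix M with rows indexed by K and columns by A - K: the purity is
  the squared Frobenius norm of M* M, which is at most \<parallel>M\<parallel>^2 \<parallel>M\<parallel>_F^2 = \<parallel>M\<parallel>^2 since the
  state is normalised, and \<parallel>M\<parallel>^2 is the largest overlap of the state with a product
  state across K, hence at most 1 - \<epsilon>^2. A set S other than C and its complement
  splits at least one of the two blocks. *)

lemma sum_Pow_disjoint_Un:
  assumes "A \<inter> B = {}"
  shows "(\<Sum>x\<in>Pow (A \<union> B). f x) = (\<Sum>u\<in>Pow A. \<Sum>v\<in>Pow B. f (u \<union> v))"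
proof -
  have "(\<Sum>x\<in>Pow (A \<union> B). f x) = (\<Sum>(u, v)\<in>Pow A \<times> Pow B. f (u \<union> v))"
    by (rule sum.reindex_bij_witness[where i="\<lambda>(u, v). u \<union> v" and j="\<lambda>x. (x \<inter> A, x \<inter> B)"])
       (use assms in \<open>auto intro!: arg_cong[where f=f]\<close>)
  then show ?thesis
    by (simp add: sum.cartesian_product)
qed

lemma sum_Pow_split:
  assumes "K \<subseteq> A"
  shows "(\<Sum>x\<in>Pow A. f x) = (\<Sum>u\<in>Pow K. \<Sum>v\<in>Pow (A - K). f (u \<union> v))"
proof -
  have "A = K \<union> (A - K)"
    using assms by blast
  then show ?thesis
    by (metis Diff_disjoint sum_Pow_disjoint_Un)
qed

lemma adjoint_le_of_bilinear_le:
  fixes M :: "'u \<Rightarrow> 'v \<Rightarrow> complex"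
  assumes "R \<ge> 0"
    and bilinear: "\<And>g h. (cmod (\<Sum>u\<in>U. \<Sum>v\<in>V. cnj (M u v) * (g u * h v)))\<^sup>2
                     \<le> R * (\<Sum>u\<in>U. (cmod (g u))\<^sup>2) * (\<Sum>v\<in>V. (cmod (h v))\<^sup>2)"
  shows "(\<Sum>v\<in>V. (cmod (\<Sum>u\<in>U. cnj (M u v) * z u))\<^sup>2) \<le> R * (\<Sum>u\<in>U. (cmod (z u))\<^sup>2)"
proof -
  define y where "y v = (\<Sum>u\<in>U. cnj (M u v) * z u)" for v
  define Y where "Y = (\<Sum>v\<in>V. (cmod (y v))\<^sup>2)"
  define Z where "Z = (\<Sum>u\<in>U. (cmod (z u))\<^sup>2)"
  have Y0: "Y \<ge> 0" and "Z \<ge> 0"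
    unfolding Y_def Z_def by (simp_all add: sum_nonneg)
  \<comment> \<open>Expanding one factor of each y v * cnj (y v) exhibits Y as the bilinear form at z and cnj y.\<close>
  have "complex_of_real Y = (\<Sum>v\<in>V. y v * cnj (y v))"
    unfolding Y_def of_real_sum by (simp only: complex_norm_square)
  also have "\<dots> = (\<Sum>u\<in>U. \<Sum>v\<in>V. cnj (M u v) * (z u * cnj (y v)))"
    by (subst (1) y_def) (simp only: sum_distrib_right mult.assoc sum.swap[where A=V])
  finally have Y: "complex_of_real Y = \<dots>" .
  have "Y * Y = (cmod (complex_of_real Y))\<^sup>2"
    using Y0 by (simp add: power2_eq_square)
  also have "\<dots> \<le> R * Z * (\<Sum>v\<in>V. (cmod (cnj (y v)))\<^sup>2)"
    unfolding Y Z_def by (rule bilinear)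
  also have "\<dots> = (R * Z) * Y"
    by (simp add: Y_def)
  finally have YY: "Y * Y \<le> (R * Z) * Y" .
  have "Y \<le> R * Z"
  proof (cases "Y = 0")
    case True
    then show ?thesis
      using \<open>Z \<ge> 0\<close> \<open>R \<ge> 0\<close> by simp
  next
    case False
    with Y0 have "Y > 0"
      by simp
    with YY show ?thesis
      by (rule mult_right_le_imp_le)
  qed
  then show ?thesis
    unfolding Y_def Z_def y_def .
qed

lemma tensor_q_Un:
  assumes "D \<inter> E = {}" and "u \<subseteq> D" and "v \<subseteq> E"
  shows "tensor_q D E a b (u \<union> v) = a u * b v"
proof -
  have "(u \<union> v) \<inter> D = u" and "(u \<union> v) \<inter> E = v"
    using assms by blast+
  then show ?thesis
    unfolding tensor_q_def by simp
qed

lemma is_state_tensor_q: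
  assumes "D \<inter> E = {}" and "is_state D a" and "is_state E b"
  shows "is_state (D \<union> E) (tensor_q D E a b)"
proof -
  have "(\<Sum>x\<in>Pow (D \<union> E). (cmod (tensor_q D E a b x))\<^sup>2)
      = (\<Sum>u\<in>Pow D. \<Sum>v\<in>Pow E. (cmod (a u))\<^sup>2 * (cmod (b v))\<^sup>2)"
    unfolding sum_Pow_disjoint_Un[OF assms(1)]
    by (intro sum.cong refl) (auto simp: tensor_q_Un[OF assms(1)] norm_mult power_mult_distrib)
  also have "\<dots> = 1"
    using assms(2,3) by (simp add: is_state_def sum_product[symmetric])
  finally show ?thesis
    unfolding is_state_def .
qed

lemma is_state_basis_empty:
  assumes "finite Q"
  shows "is_state Q (\<lambda>x. if x = {} then 1 else 0)"
proof -
  have "(cmod (if x = {} then 1 else 0 :: complex))\<^sup>2 = (if x = {} then 1 else 0)" for x :: "nat set"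
    by simp
  then show ?thesis
    using assms by (simp add: is_state_def)
qed

lemma is_state_normalize:
  assumes "(\<Sum>x\<in>Pow Q. (cmod (g x))\<^sup>2) = N" and "N > 0"
  shows "is_state Q (\<lambda>x. g x / complex_of_real (sqrt N))"
  using assms
  by (simp add: is_state_def norm_divide power_divide sum_divide_distrib[symmetric])

lemma eps_far_product_overlap_le:
  assumes far: "eps_far_from_product A \<epsilon> f" and "K \<noteq> {}" and "K \<subset> A"
    and g: "is_state K g" and h: "is_state (A - K) h"
  shows "(cmod (\<Sum>u\<in>Pow K. \<Sum>v\<in>Pow (A - K). cnj (f (u \<union> v)) * (g u * h v)))\<^sup>2 \<le> 1 - \<epsilon>\<^sup>2"
proof -
  let ?\<chi> = "tensor_q K (A - K) g h"
  have disj: "K \<inter> (A - K) = {}" and A: "K \<union> (A - K) = A"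
    using assms(3) by blast+
  have "multipartite_product A ?\<chi>"
    unfolding multipartite_product_def
    using is_state_tensor_q[OF disj g h] A assms(2,3) g h by metis
  moreover have "inner_q A f ?\<chi> = (\<Sum>u\<in>Pow K. \<Sum>v\<in>Pow (A - K). cnj (f (u \<union> v)) * (g u * h v))"
    unfolding inner_q_def sum_Pow_split[OF psubset_imp_subset[OF assms(3)]]
    by (intro sum.cong refl) (auto simp: tensor_q_Un[OF disj])
  ultimately show ?thesis
    using far unfolding eps_far_from_product_def by metis
qed

lemma eps_far_sq_le_one:
  assumes "finite A" and "eps_far_from_product A \<epsilon> f" and "K \<noteq> {}" and "K \<subset> A"
  shows "\<epsilon>\<^sup>2 \<le> 1"
proof -
  have "finite K" and "finite (A - K)"
    using assms(1,4) finite_subset by auto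
  then have "0 \<le> 1 - \<epsilon>\<^sup>2"
    using eps_far_product_overlap_le[OF assms(2-4) is_state_basis_empty is_state_basis_empty]
    by (meson order_trans zero_le_power2)
  then show ?thesis
    by simp
qed

lemma eps_far_bilinear_le:
  assumes "finite A" and far: "eps_far_from_product A \<epsilon> f" and "K \<noteq> {}" and "K \<subset> A"
  shows "(cmod (\<Sum>u\<in>Pow K. \<Sum>v\<in>Pow (A - K). cnj (f (u \<union> v)) * (g u * h v)))\<^sup>2
         \<le> (1 - \<epsilon>\<^sup>2) * (\<Sum>u\<in>Pow K. (cmod (g u))\<^sup>2) * (\<Sum>v\<in>Pow (A - K). (cmod (h v))\<^sup>2)"
    (is "(cmod (?ip g h))\<^sup>2 \<le> _")
proof -
  define G where "G = (\<Sum>u\<in>Pow K. (cmod (g u))\<^sup>2)"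
  define H where "H = (\<Sum>v\<in>Pow (A - K). (cmod (h v))\<^sup>2)"
  have fin: "finite (Pow K)" "finite (Pow (A - K))"
    using assms(1,4) finite_subset by auto
  have "G \<ge> 0" "H \<ge> 0"
    unfolding G_def H_def by (simp_all add: sum_nonneg)
  then consider "G = 0" | "H = 0" | "G > 0" "H > 0"
    by linarith
  then have "(cmod (?ip g h))\<^sup>2 \<le> (1 - \<epsilon>\<^sup>2) * G * H"
  proof cases
    case 1
    then have "\<forall>u\<in>Pow K. g u = 0"
      using fin unfolding G_def by (simp add: sum_nonneg_eq_0_iff)
    then show ?thesis
      using 1 by simp
  next
    case 2
    then have "\<forall>v\<in>Pow (A - K). h v = 0"
      using fin unfolding H_def by (simp add: sum_nonneg_eq_0_iff)
    then show ?thesis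
      using 2 by simp
  next
    case 3
    define g' where "g' u = g u / complex_of_real (sqrt G)" for u
    define h' where "h' v = h v / complex_of_real (sqrt H)" for v
    have "?ip g' h' = ?ip g h / complex_of_real (sqrt G * sqrt H)"
      unfolding g'_def h'_def by (simp add: sum_divide_distrib mult_ac)
    moreover have "(cmod (complex_of_real (sqrt G * sqrt H)))\<^sup>2 = G * H"
      using 3 by (simp add: norm_mult power_mult_distrib)
    ultimately have "(cmod (?ip g h))\<^sup>2 / (G * H) = (cmod (?ip g' h'))\<^sup>2"
      by (simp add: norm_divide power_divide)
    also have "\<dots> \<le> 1 - \<epsilon>\<^sup>2"
      unfolding g'_def h'_def using 3 G_def H_def
      by (intro eps_far_product_overlap_le[OF far assms(3,4)] is_state_normalize) simp_all
    finally show ?thesis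
      using 3 by (simp add: divide_le_eq mult_ac)
  qed
  then show ?thesis
    unfolding G_def H_def .
qed

(* <f (x) f| SWAP_K |f (x) f>, which is Tr rho^2 for the reduced state rho of f on K \<inter> A. *)
definition reduced_purity :: "nat set \<Rightarrow> nat set \<Rightarrow> (nat set \<Rightarrow> complex) \<Rightarrow> complex" where
  "reduced_purity A K f = (\<Sum>x1\<in>Pow A. \<Sum>x2\<in>Pow A. cnj (f x1 * f x2) *
      (f ((x1 - K) \<union> (x2 \<inter> K)) * f ((x2 - K) \<union> (x1 \<inter> K))))"

lemma swap_test_accept_prob_eq:
  "swap_test_accept_prob Q S \<psi> = (Re (reduced_purity Q {} \<psi>) + Re (reduced_purity Q S \<psi>)) / 2"
proof -
  have "(\<Sum>p\<in>Pow Q \<times> Pow Q. cnj (two_copies \<psi> p) * ((two_copies \<psi> p + two_copies \<psi> (swap_on S p)) / 2))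
      = (\<Sum>(x1, x2)\<in>Pow Q \<times> Pow Q.
          (cnj (\<psi> x1 * \<psi> x2) * (\<psi> ((x1 - {}) \<union> (x2 \<inter> {})) * \<psi> ((x2 - {}) \<union> (x1 \<inter> {})))
         + cnj (\<psi> x1 * \<psi> x2) * (\<psi> ((x1 - S) \<union> (x2 \<inter> S)) * \<psi> ((x2 - S) \<union> (x1 \<inter> S)))) / 2)"
    by (intro sum.cong refl) (auto simp: two_copies_def swap_on_def field_simps)
  also have "\<dots> = (reduced_purity Q {} \<psi> + reduced_purity Q S \<psi>) / 2"
    unfolding reduced_purity_def sum.cartesian_product sum_divide_distrib sum.distrib[symmetric]
    by (simp add: case_prod_beta)
  finally show ?thesis
    unfolding swap_test_accept_prob_def by (simp only: Re_divide_numeral plus_complex.sel)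
qed

lemma reduced_purity_Int: "reduced_purity A K f = reduced_purity A (K \<inter> A) f"
proof -
  have "(x1 - K) \<union> (x2 \<inter> K) = (x1 - K \<inter> A) \<union> (x2 \<inter> (K \<inter> A))"
    if "x1 \<subseteq> A" "x2 \<subseteq> A" for x1 x2
    using that by blast
  then show ?thesis
    unfolding reduced_purity_def by (intro sum.cong refl) auto
qed

lemma reduced_purity_trivial:
  assumes "is_state A f" and "K \<inter> A = {} \<or> A \<subseteq> K"
  shows "reduced_purity A K f = 1"
proof -
  have "reduced_purity A K f = (\<Sum>x1\<in>Pow A. \<Sum>x2\<in>Pow A. (cnj (f x1) * f x1) * (cnj (f x2) * f x2))"
    unfolding reduced_purity_def
  proof (intro sum.cong refl)
    fix x1 x2
    assume "x1 \<in> Pow A" "x2 \<in> Pow A"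
    then consider "(x1 - K) \<union> (x2 \<inter> K) = x1" "(x2 - K) \<union> (x1 \<inter> K) = x2"
      | "(x1 - K) \<union> (x2 \<inter> K) = x2" "(x2 - K) \<union> (x1 \<inter> K) = x1"
      using assms(2) by blast
    then show "cnj (f x1 * f x2) * (f ((x1 - K) \<union> (x2 \<inter> K)) * f ((x2 - K) \<union> (x1 \<inter> K)))
        = (cnj (f x1) * f x1) * (cnj (f x2) * f x2)"
      by cases (simp_all add: mult_ac)
  qed
  also have "\<dots> = (\<Sum>x\<in>Pow A. cnj (f x) * f x)\<^sup>2"
    by (simp add: power2_eq_square sum_product)
  also have "(\<Sum>x\<in>Pow A. cnj (f x) * f x) = complex_of_real (\<Sum>x\<in>Pow A. (cmod (f x))\<^sup>2)"
    unfolding of_real_sum by (simp only: complex_norm_square mult.commute)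
  finally show ?thesis
    using assms(1) unfolding is_state_def by simp
qed

lemma reduced_purity_tensor:
  assumes disj: "C \<inter> E = {}" and \<psi>: "\<forall>x\<in>Pow (C \<union> E). \<psi> x = tensor_q C E a b x"
  shows "reduced_purity (C \<union> E) K \<psi> = reduced_purity C K a * reduced_purity E K b"
proof -
  have \<psi>_Un: "\<psi> (c \<union> d) = a c * b d" if "c \<subseteq> C" "d \<subseteq> E" for c d
  proof -
    have "c \<union> d \<in> Pow (C \<union> E)"
      using that by blast
    then show ?thesis
      using \<psi> tensor_q_Un[OF disj that] by simp
  qed
  have swap_Un: "(c1 \<union> d1 - K) \<union> ((c2 \<union> d2) \<inter> K) = ((c1 - K) \<union> (c2 \<inter> K)) \<union> ((d1 - K) \<union> (d2 \<inter> K))"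
    for c1 c2 d1 d2 :: "nat set"
    by blast
  have "reduced_purity (C \<union> E) K \<psi> = (\<Sum>c1\<in>Pow C. \<Sum>d1\<in>Pow E. \<Sum>c2\<in>Pow C. \<Sum>d2\<in>Pow E.
      (cnj (a c1 * a c2) * (a ((c1 - K) \<union> (c2 \<inter> K)) * a ((c2 - K) \<union> (c1 \<inter> K))))
      * (cnj (b d1 * b d2) * (b ((d1 - K) \<union> (d2 \<inter> K)) * b ((d2 - K) \<union> (d1 \<inter> K)))))"
    unfolding reduced_purity_def sum_Pow_disjoint_Un[OF disj] swap_Un
  proof (intro sum.cong refl)
    fix c1 c2 d1 d2
    assume "c1 \<in> Pow C" "d1 \<in> Pow E" "c2 \<in> Pow C" "d2 \<in> Pow E"
    then have "(c1 - K) \<union> (c2 \<inter> K) \<subseteq> C" "(c2 - K) \<union> (c1 \<inter> K) \<subseteq> C"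
      and "(d1 - K) \<union> (d2 \<inter> K) \<subseteq> E" "(d2 - K) \<union> (d1 \<inter> K) \<subseteq> E"
      and "c1 \<subseteq> C" "c2 \<subseteq> C" "d1 \<subseteq> E" "d2 \<subseteq> E"
      by blast+
    then show "cnj (\<psi> (c1 \<union> d1) * \<psi> (c2 \<union> d2)) *
        (\<psi> ((c1 - K) \<union> (c2 \<inter> K) \<union> ((d1 - K) \<union> (d2 \<inter> K))) *
         \<psi> ((c2 - K) \<union> (c1 \<inter> K) \<union> ((d2 - K) \<union> (d1 \<inter> K))))
      = (cnj (a c1 * a c2) * (a ((c1 - K) \<union> (c2 \<inter> K)) * a ((c2 - K) \<union> (c1 \<inter> K))))
        * (cnj (b d1 * b d2) * (b ((d1 - K) \<union> (d2 \<inter> K)) * b ((d2 - K) \<union> (d1 \<inter> K))))"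
      by (simp add: \<psi>_Un mult_ac)
  qed
  also have "\<dots> = reduced_purity C K a * reduced_purity E K b"
    unfolding reduced_purity_def by (simp only: sum_product)
  finally show ?thesis .
qed

lemma reduced_purity_gram:
  assumes "K \<subseteq> A"
  shows "reduced_purity A K f = complex_of_real (\<Sum>v1\<in>Pow (A - K). \<Sum>v2\<in>Pow (A - K).
            (cmod (\<Sum>u\<in>Pow K. cnj (f (u \<union> v1)) * f (u \<union> v2)))\<^sup>2)"
proof -
  have "reduced_purity A K f = (\<Sum>u1\<in>Pow K. \<Sum>v1\<in>Pow (A - K). \<Sum>u2\<in>Pow K. \<Sum>v2\<in>Pow (A - K).
      cnj (f (u1 \<union> v1)) * f (u1 \<union> v2) * (f (u2 \<union> v1) * cnj (f (u2 \<union> v2))))"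
    unfolding reduced_purity_def sum_Pow_split[OF assms]
  proof (intro sum.cong refl)
    fix u1 v1 u2 v2
    assume "u1 \<in> Pow K" "v1 \<in> Pow (A - K)" "u2 \<in> Pow K" "v2 \<in> Pow (A - K)"
    then have "(u1 \<union> v1 - K) \<union> ((u2 \<union> v2) \<inter> K) = u2 \<union> v1"
      and "(u2 \<union> v2 - K) \<union> ((u1 \<union> v1) \<inter> K) = u1 \<union> v2"
      by blast+
    then show "cnj (f (u1 \<union> v1) * f (u2 \<union> v2)) *
        (f ((u1 \<union> v1 - K) \<union> ((u2 \<union> v2) \<inter> K)) * f ((u2 \<union> v2 - K) \<union> ((u1 \<union> v1) \<inter> K)))
      = cnj (f (u1 \<union> v1)) * f (u1 \<union> v2) * (f (u2 \<union> v1) * cnj (f (u2 \<union> v2)))"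
      by (simp add: mult_ac)
  qed
  also have "\<dots> = (\<Sum>v1\<in>Pow (A - K). \<Sum>v2\<in>Pow (A - K). \<Sum>u1\<in>Pow K. \<Sum>u2\<in>Pow K.
      cnj (f (u1 \<union> v1)) * f (u1 \<union> v2) * (f (u2 \<union> v1) * cnj (f (u2 \<union> v2))))"
    by (rule trans[OF sum.swap]) (intro sum.cong refl trans[OF sum.cong[OF refl sum.swap] sum.swap])
  also have "\<dots> = (\<Sum>v1\<in>Pow (A - K). \<Sum>v2\<in>Pow (A - K).
      (\<Sum>u\<in>Pow K. cnj (f (u \<union> v1)) * f (u \<union> v2)) * cnj (\<Sum>u\<in>Pow K. cnj (f (u \<union> v1)) * f (u \<union> v2)))"
    unfolding cnj_sum complex_cnj_mult complex_cnj_cnj sum_product ..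
  also have "\<dots> = complex_of_real (\<Sum>v1\<in>Pow (A - K). \<Sum>v2\<in>Pow (A - K).
      (cmod (\<Sum>u\<in>Pow K. cnj (f (u \<union> v1)) * f (u \<union> v2)))\<^sup>2)"
    unfolding of_real_sum complex_norm_square ..
  finally show ?thesis .
qed

lemma reduced_purity_le_of_eps_far:
  assumes "finite A" and state: "is_state A f" and far: "eps_far_from_product A \<epsilon> f"
    and "K \<noteq> {}" and "K \<subset> A"
  obtains t where "reduced_purity A K f = complex_of_real t" and "0 \<le> t" and "t \<le> 1 - \<epsilon>\<^sup>2"
proof -
  define T where "T = (\<Sum>v1\<in>Pow (A - K). \<Sum>v2\<in>Pow (A - K).
            (cmod (\<Sum>u\<in>Pow K. cnj (f (u \<union> v1)) * f (u \<union> v2)))\<^sup>2)"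
  have R: "0 \<le> 1 - \<epsilon>\<^sup>2"
    using eps_far_sq_le_one[OF assms(1) far assms(4,5)] by simp
  have "T = (\<Sum>v2\<in>Pow (A - K). \<Sum>v1\<in>Pow (A - K).
            (cmod (\<Sum>u\<in>Pow K. cnj (f (u \<union> v1)) * f (u \<union> v2)))\<^sup>2)"
    unfolding T_def by (rule sum.swap)
  also have "\<dots> \<le> (\<Sum>v2\<in>Pow (A - K). (1 - \<epsilon>\<^sup>2) * (\<Sum>u\<in>Pow K. (cmod (f (u \<union> v2)))\<^sup>2))"
    by (intro sum_mono adjoint_le_of_bilinear_le[OF R] eps_far_bilinear_le[OF assms(1) far assms(4,5)])
  also have "\<dots> = (1 - \<epsilon>\<^sup>2) * (\<Sum>x\<in>Pow A. (cmod (f x))\<^sup>2)"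
    unfolding sum_Pow_split[OF psubset_imp_subset[OF assms(5)]] sum_distrib_left by (rule sum.swap)
  also have "\<dots> = 1 - \<epsilon>\<^sup>2"
    using state unfolding is_state_def by simp
  finally have "T \<le> 1 - \<epsilon>\<^sup>2" .
  moreover have "reduced_purity A K f = complex_of_real T"
    unfolding T_def using assms(5) by (intro reduced_purity_gram) auto
  moreover have "0 \<le> T"
    unfolding T_def by (intro sum_nonneg) simp
  ultimately show ?thesis
    using that by blast
qed

lemma reduced_purity_cases:
  assumes "finite A" and "is_state A f" and "eps_far_from_product A \<epsilon> f"
  obtains t where "reduced_purity A K f = complex_of_real t" and "0 \<le> t" and "t \<le> 1"
    and "K \<inter> A \<noteq> {} \<and> \<not> A \<subseteq> K \<longrightarrow> t \<le> 1 - \<epsilon>\<^sup>2"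
proof (cases "K \<inter> A = {} \<or> A \<subseteq> K")
  case True
  then show ?thesis
    using that[of 1] reduced_purity_trivial[OF assms(2)] by auto
next
  case False
  then have "K \<inter> A \<noteq> {}" and "K \<inter> A \<subset> A"
    by blast+
  then obtain t where t: "reduced_purity A (K \<inter> A) f = complex_of_real t" "0 \<le> t" "t \<le> 1 - \<epsilon>\<^sup>2"
    by (rule reduced_purity_le_of_eps_far[OF assms])
  moreover have "t \<le> 1"
    using t(3) zero_le_power2[of \<epsilon>] by linarith
  ultimately show ?thesis
    using that[of t] unfolding reduced_purity_Int[of A K f] by blast
qed

lemma swap_test_accept_prob_tensor:
  assumes "C \<subseteq> Q" and "is_state C a" and "is_state (Q - C) b"
    and "\<forall>x\<in>Pow Q. \<psi> x = tensor_q C (Q - C) a b x"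
  shows "swap_test_accept_prob Q S \<psi> = (1 + Re (reduced_purity C S a * reduced_purity (Q - C) S b)) / 2"
proof -
  have Q: "Q = C \<union> (Q - C)" and disj: "C \<inter> (Q - C) = {}"
    using assms(1) by blast+
  have "reduced_purity Q K \<psi> = reduced_purity C K a * reduced_purity (Q - C) K b" for K
    using reduced_purity_tensor[OF disj] assms(4) Q by metis
  moreover have "reduced_purity C {} a = 1" and "reduced_purity (Q - C) {} b = 1"
    using reduced_purity_trivial assms(2,3) by blast+
  ultimately show ?thesis
    unfolding swap_test_accept_prob_eq by simp
qed

lemma swap_test_accept_prob_tensor_eq_1:
  assumes "C \<subseteq> Q" and "is_state C a" and "is_state (Q - C) b"
    and "\<forall>x\<in>Pow Q. \<psi> x = tensor_q C (Q - C) a b x"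
    and "S \<inter> C = {} \<or> C \<subseteq> S" and "S \<inter> (Q - C) = {} \<or> Q - C \<subseteq> S"
  shows "swap_test_accept_prob Q S \<psi> = 1"
  unfolding swap_test_accept_prob_tensor[OF assms(1-4)] reduced_purity_trivial[OF assms(2,5)]
    reduced_purity_trivial[OF assms(3,6)] by simp

lemma swap_test_accept_prob_tensor_le:
  assumes "finite Q" and "C \<subseteq> Q" and "is_state C a" and "is_state (Q - C) b"
    and "\<forall>x\<in>Pow Q. \<psi> x = tensor_q C (Q - C) a b x"
    and "eps_far_from_product C \<epsilon> a" and "eps_far_from_product (Q - C) \<epsilon> b"
    and split: "(S \<inter> C \<noteq> {} \<and> \<not> C \<subseteq> S) \<or> (S \<inter> (Q - C) \<noteq> {} \<and> \<not> Q - C \<subseteq> S)"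
  shows "swap_test_accept_prob Q S \<psi> \<le> 1 - \<epsilon>\<^sup>2 / 2"
proof -
  have "finite C" and "finite (Q - C)"
    using assms(1,2) finite_subset by auto
  obtain tA where tA: "reduced_purity C S a = complex_of_real tA" "0 \<le> tA" "tA \<le> 1"
      "S \<inter> C \<noteq> {} \<and> \<not> C \<subseteq> S \<longrightarrow> tA \<le> 1 - \<epsilon>\<^sup>2"
    by (rule reduced_purity_cases[where K=S, OF \<open>finite C\<close> assms(3,6)])
  obtain tB where tB: "reduced_purity (Q - C) S b = complex_of_real tB" "0 \<le> tB" "tB \<le> 1"
      "S \<inter> (Q - C) \<noteq> {} \<and> \<not> Q - C \<subseteq> S \<longrightarrow> tB \<le> 1 - \<epsilon>\<^sup>2"
    by (rule reduced_purity_cases[where K=S, OF \<open>finite (Q - C)\<close> assms(4,7)])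
  have "tA * tB \<le> tA" and "tA * tB \<le> tB"
    using tA(2,3) tB(2,3) by (simp_all add: mult_left_le mult_left_le_one_le)
  moreover have "tA \<le> 1 - \<epsilon>\<^sup>2 \<or> tB \<le> 1 - \<epsilon>\<^sup>2"
    using split tA(4) tB(4) by blast
  ultimately have "tA * tB \<le> 1 - \<epsilon>\<^sup>2"
    by linarith
  then show ?thesis
    unfolding swap_test_accept_prob_tensor[OF assms(2-5)] tA(1) tB(1) by simp
qed

theorem corollary2p18:
  fixes n :: nat and C S :: "nat set" and a b \<psi> :: "nat set \<Rightarrow> complex" and \<epsilon> :: real
  assumes "C \<noteq> {}" and "C \<subset> {1..n}"
    and "is_state C a" and "is_state ({1..n} - C) b"
    and "\<forall>x\<in>Pow {1..n}. \<psi> x = tensor_q C ({1..n} - C) a b x"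
    and "eps_far_from_product C \<epsilon> a" and "eps_far_from_product ({1..n} - C) \<epsilon> b"
    and "S \<noteq> {}" and "S \<subset> {1..n}"
  shows "(S = C \<or> S = {1..n} - C \<longrightarrow> swap_test_accept_prob {1..n} S \<psi> = 1)
       \<and> (S \<noteq> C \<and> S \<noteq> {1..n} - C \<longrightarrow> swap_test_accept_prob {1..n} S \<psi> \<le> 1 - \<epsilon>^2 / 2)"
proof (intro conjI impI)
  assume "S = C \<or> S = {1..n} - C"
  then show "swap_test_accept_prob {1..n} S \<psi> = 1"
    using assms(2-5) by (intro swap_test_accept_prob_tensor_eq_1) auto
next
  assume "S \<noteq> C \<and> S \<noteq> {1..n} - C"
  then have "(S \<inter> C \<noteq> {} \<and> \<not> C \<subseteq> S) \<or> (S \<inter> ({1..n} - C) \<noteq> {} \<and> \<not> {1..n} - C \<subseteq> S)"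
    using assms(8,9) by blast
  then show "swap_test_accept_prob {1..n} S \<psi> \<le> 1 - \<epsilon>^2 / 2"
    using assms(2-7) by (intro swap_test_accept_prob_tensor_le) auto
qed

end
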